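(* If $\theta:\Sigma$, then $\theta\models\mathsf a\#t$ for every $\mathsf a\#t\in|\Sigma|$.
   Context: Terms: $t ::= x \mid \mathsf{a} \mid c \mid f(\vec t)\mid (a\;b)\cdot t\mid\langle a\rangle t$ over variables $x$ and a disjoint countably infinite set of name-symbols $\mathsf a$ (many-sorted: data types $\delta$, name types $\nu$, abstraction types $\langle\nu\rangle\tau$). Contexts $\Sigma::=\cdot\mid\Sigma,x{:}\tau\mid\Sigma\#\mathsf a{:}\nu$ (no symbol twice); $Tm_\Sigma$ is the set of terms well-typed in $\Sigma$; $|\cdot|=\emptyset$, $|\Sigma,x{:}\tau|=|\Sigma|$, $|\Sigma\#\mathsf a{:}\nu|=|\Sigma|\cup\{\mathsf a\#t\mid t\in Tm_\Sigma\}$. $Tm$: ground swapping-free terms $t::=\mathsf a\mid c\mid f(\vec t)\mid\langle\mathsf a\rangle t$. Syntactic swapping: $(\mathsf a\;\mathsf b)\cdot\mathsf a=\mathsf b$, $(\mathsf a\;\mathsf b)\cdot\mathsf b=\mathsf a$, $(\mathsf a\;\mathsf b)\cdot\mathsf c=\mathsf c$ ($\mathsf c\ne\mathsf a,\mathsf b$), $(\mathsf a\;\mathsf b)\cdot c=c$, $(\mathsf a\;\mathsf b)\cdot f(\vec t)=f((\mathsf a\;\mathsf b)\cdot\vec t)$, $(\mathsf a\;\mathsf b)\cdot\langle\mathsf c\rangle t=\langle(\mathsf a\;\mathsf b)\cdot\mathsf c\rangle((\mathsf a\;\mathsf b)\cdot t)$. Freshness (inductive): $\mathsf a\#\mathsf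 b$ if $\mathsf a\ne\mathsf b$; $\mathsf a\#c$; $\mathsf a\#f(\vec t)$ if $\mathsf a\#t_i$ for all $i$; $\mathsf a\#\langle\mathsf a\rangle t$; $\mathsf a\#\langle\mathsf b\rangle t$ if $\mathsf a\ne\mathsf b$ and $\mathsf a\#t$. Equality (inductive): $\mathsf a\approx\mathsf a$; $c\approx c$; $f(\vec t)\approx f(\vec u)$ if $t_i\approx u_i$; $\langle\mathsf a\rangle t\approx\langle\mathsf a\rangle u$ if $t\approx u$; $\langle\mathsf a\rangle t\approx\langle\mathsf b\rangle u$ if $\mathsf a\ne\mathsf b$, $\mathsf a\#u$, $t\approx(\mathsf a\;\mathsf b)\cdot u$. $NTm=Tm/{\approx}$ (freshness and swapping respect $\approx$). An interpretation $\theta$ maps variables to elements of $NTm$ and extends to terms by $\theta(\mathsf a)=\mathsf a$, $\theta(c)=c$, $\theta(f(\vec t))=f(\theta(\vec t))$, $\theta((a\;b)\cdot t)=(\theta(a)\;\theta(b))\cdot\theta(t)$, $\theta(\langle a\rangle t)=\langle\theta(a)\rangle\theta(t)$; $\theta\models a\#t$ iff $\theta(a)\#\theta(t)$. $\theta:\Sigma$ means that for each $x{:}\tau$ in $\Sigma$, $\theta(x)$ is of type $\tau$, and $\mathsf a\#\theta(x)$ holds for each constraint $\mathsf a\#x\in|\Sigma|$ with $x$ a variable. *)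

theory Defs
  imports Main
begin

text \<open>Name-symbols are pairs (nu, i): the i-th name-symbol of name type nu, so each name type has
  countably infinitely many name-symbols and distinct name types have disjoint symbol sets.\<close>

type_synonym dname = nat
type_synonym nname = nat
type_synonym var = nat
type_synonym cname = nat
type_synonym fname = nat
type_synonym atom = "nname \<times> nat"

definition atom_sort :: "atom \<Rightarrow> nname" where "atom_sort a = fst a"

datatype ty = DataTy dname | NameTy nname | AbsTy nname ty

type_synonym signature = "(cname \<Rightarrow> dname) \<times> (fname \<Rightarrow> ty list \<times> dname)"

datatype trm = Var var | Sym atom | Const cname | Fn fname "trm list"
  | Swap trm trm trm
  | Abst trm trm

datatype gtrm = GAtom atom | GConst cname | GFn fname "gtrm list" | GAbs atom gtrm

fun swap_atom :: "atom \<Rightarrow> atom \<Rightarrow> atom \<Rightarrow> atom" where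
  "swap_atom a b c = (if c = a then b else if c = b then a else c)"

fun gswap :: "atom \<Rightarrow> atom \<Rightarrow> gtrm \<Rightarrow> gtrm" where
  "gswap a b (GAtom c) = GAtom (swap_atom a b c)"
| "gswap a b (GConst c) = GConst c"
| "gswap a b (GFn f ts) = GFn f (map (gswap a b) ts)"
| "gswap a b (GAbs c t) = GAbs (swap_atom a b c) (gswap a b t)"

inductive gfresh :: "atom \<Rightarrow> gtrm \<Rightarrow> bool" where
  "a \<noteq> b \<Longrightarrow> gfresh a (GAtom b)"
| "gfresh a (GConst c)"
| "(\<forall>t\<in>set ts. gfresh a t) \<Longrightarrow> gfresh a (GFn f ts)"
| "gfresh a (GAbs a t)"
| "a \<noteq> b \<Longrightarrow> gfresh a t \<Longrightarrow> gfresh a (GAbs b t)"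

inductive gtyped :: "signature \<Rightarrow> gtrm \<Rightarrow> ty \<Rightarrow> bool" for S where
  "gtyped S (GAtom a) (NameTy (atom_sort a))"
| "gtyped S (GConst c) (DataTy (fst S c))"
| "snd S f = (\<tau>s, \<delta>) \<Longrightarrow> list_all2 (gtyped S) ts \<tau>s \<Longrightarrow> gtyped S (GFn f ts) (DataTy \<delta>)"
| "gtyped S t \<tau> \<Longrightarrow> gtyped S (GAbs a t) (AbsTy (atom_sort a) \<tau>)"

text \<open>Contexts, written left to right: Sigma, x:tau appends CVar x tau at the end,
  Sigma # a:nu appends CFresh a at the end (nu is the name type of a).\<close>
datatype centry = CVar var ty | CFresh atom
type_synonym ctx = "centry list"

definition ctx_wf :: "ctx \<Rightarrow> bool" where
  "ctx_wf \<Sigma> \<longleftrightarrow> distinct \<Sigma> \<and>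
     (\<forall>x \<tau> \<tau>'. CVar x \<tau> \<in> set \<Sigma> \<and> CVar x \<tau>' \<in> set \<Sigma> \<longrightarrow> \<tau> = \<tau>')"

inductive typed :: "signature \<Rightarrow> ctx \<Rightarrow> trm \<Rightarrow> ty \<Rightarrow> bool" for S \<Sigma> where
  "CVar x \<tau> \<in> set \<Sigma> \<Longrightarrow> typed S \<Sigma> (Var x) \<tau>"
| "CFresh a \<in> set \<Sigma> \<Longrightarrow> typed S \<Sigma> (Sym a) (NameTy (atom_sort a))"
| "typed S \<Sigma> (Const c) (DataTy (fst S c))"
| "snd S f = (\<tau>s, \<delta>) \<Longrightarrow> list_all2 (typed S \<Sigma>) ts \<tau>s \<Longrightarrow> typed S \<Sigma> (Fn f ts) (DataTy \<delta>)"
| "typed S \<Sigma> a (NameTy \<nu>) \<Longrightarrow> typed S \<Sigma> b (NameTy \<nu>) \<Longrightarrow> typed S \<Sigma> t \<tau>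
     \<Longrightarrow> typed S \<Sigma> (Swap a b t) \<tau>"
| "typed S \<Sigma> a (NameTy \<nu>) \<Longrightarrow> typed S \<Sigma> t \<tau> \<Longrightarrow> typed S \<Sigma> (Abst a t) (AbsTy \<nu> \<tau>)"

definition Tm_ctx :: "signature \<Rightarrow> ctx \<Rightarrow> trm set" where
  "Tm_ctx S \<Sigma> = {t. \<exists>\<tau>. typed S \<Sigma> t \<tau>}"

text \<open>The freshness constraints |Sigma|, as pairs (a, t) standing for a # t.
  Defined by recursion on the reversed context (most recent entry first).\<close>
primrec fresh_ctx_rev :: "signature \<Rightarrow> centry list \<Rightarrow> (atom \<times> trm) set" where
  "fresh_ctx_rev S [] = {}"
| "fresh_ctx_rev S (e # \<Gamma>) =
     (case e of CVar x \<tau> \<Rightarrow> fresh_ctx_rev S \<Gamma>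
      | CFresh a \<Rightarrow> fresh_ctx_rev S \<Gamma> \<union> {(a, t) | t. t \<in> Tm_ctx S (rev \<Gamma>)})"

definition fresh_ctx :: "signature \<Rightarrow> ctx \<Rightarrow> (atom \<times> trm) set" where
  "fresh_ctx S \<Sigma> = fresh_ctx_rev S (rev \<Sigma>)"

text \<open>Interpretations: each variable is mapped to a ground term (a representative of its
  alpha-equivalence class in NTm; freshness respects alpha-equivalence).
  Extension to terms; for ill-typed swaps/abstractions (name position not a name) the value
  is irrelevant and fixed arbitrarily.\<close>
type_synonym interp = "var \<Rightarrow> gtrm"

fun interp_trm :: "interp \<Rightarrow> trm \<Rightarrow> gtrm" where
  "interp_trm \<theta> (Var x) = \<theta> x"
| "interp_trm \<theta> (Sym a) = GAtom a"
| "interp_trm \<theta> (Const c) = GConst c"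
| "interp_trm \<theta> (Fn f ts) = GFn f (map (interp_trm \<theta>) ts)"
| "interp_trm \<theta> (Swap a b t) =
     (case (interp_trm \<theta> a, interp_trm \<theta> b) of
        (GAtom a', GAtom b') \<Rightarrow> gswap a' b' (interp_trm \<theta> t)
      | _ \<Rightarrow> undefined)"
| "interp_trm \<theta> (Abst a t) =
     (case interp_trm \<theta> a of GAtom a' \<Rightarrow> GAbs a' (interp_trm \<theta> t) | _ \<Rightarrow> undefined)"

text \<open>theta |= a # t  (here a is a name-symbol, so theta(a) = a).\<close>
definition models_fresh :: "interp \<Rightarrow> atom \<Rightarrow> trm \<Rightarrow> bool" where
  "models_fresh \<theta> a t \<longleftrightarrow> gfresh a (interp_trm \<theta> t)"

definition interp_ok :: "signature \<Rightarrow> interp \<Rightarrow> ctx \<Rightarrow> bool" where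
  "interp_ok S \<theta> \<Sigma> \<longleftrightarrow>
     (\<forall>x \<tau>. CVar x \<tau> \<in> set \<Sigma> \<longrightarrow> gtyped S (\<theta> x) \<tau>) \<and>
     (\<forall>a x. (a, Var x) \<in> fresh_ctx S \<Sigma> \<longrightarrow> gfresh a (\<theta> x))"

end

theory Submission
  imports Defs
begin

text \<open>A constraint a # t of |\<Sigma>| arises from a split \<Sigma> = \<Gamma>, a, \<Delta> with t well-typed in \<Gamma>.
  Induction on t shows that \<theta>(t) is built from \<theta>(x) for variables x of \<Gamma>, which are fresh
  for a since a # x is itself a constraint of |\<Sigma>|, and from name-symbols of \<Gamma>, which differ
  from a because no symbol occurs twice in \<Sigma>. Freshness is preserved by swapping two names
  different from a, by equivariance.\<close>

lemma gfresh_eqvt: "gfresh a u \<Longrightarrow> gfresh (swap_atom b c a) (gswap b c u)"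
proof (induction rule: gfresh.induct)
  case (1 a d)
  then have "swap_atom b c a \<noteq> swap_atom b c d" by auto
  then show ?case by (simp only: gswap.simps) (rule gfresh.intros(1))
next
  case (5 a d t)
  then have "swap_atom b c a \<noteq> swap_atom b c d" by auto
  with 5 show ?case by (simp only: gswap.simps) (rule gfresh.intros(5))
qed (auto intro!: gfresh.intros)

lemma gfresh_gswap: "gfresh a u \<Longrightarrow> a \<noteq> b \<Longrightarrow> a \<noteq> c \<Longrightarrow> gfresh a (gswap b c u)"
  using gfresh_eqvt[of a u b c] by simp

lemma fresh_ctx_rev_append_mono: "fresh_ctx_rev S \<Gamma> \<subseteq> fresh_ctx_rev S (\<Delta> @ \<Gamma>)"
proof (induction \<Delta>)
  case (Cons e \<Delta>)
  then show ?case by (cases e) auto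
qed simp

lemma mem_fresh_ctx_rev_iff:
  "(a, t) \<in> fresh_ctx_rev S R \<longleftrightarrow>
     (\<exists>\<Gamma> \<Delta>. rev R = \<Gamma> @ CFresh a # \<Delta> \<and> t \<in> Tm_ctx S \<Gamma>)" (is "?lhs \<longleftrightarrow> ?rhs")
proof
  show "?lhs \<Longrightarrow> ?rhs"
  proof (induction R)
    case (Cons e R)
    show ?case
    proof (cases "(a, t) \<in> fresh_ctx_rev S R")
      case True
      with Cons.IH obtain \<Gamma> \<Delta> where "rev R = \<Gamma> @ CFresh a # \<Delta>" "t \<in> Tm_ctx S \<Gamma>" by blast
      then show ?thesis by (intro exI[of _ \<Gamma>] exI[of _ "\<Delta> @ [e]"]) simp
    next
      case False
      with Cons.prems have "e = CFresh a" "t \<in> Tm_ctx S (rev R)" by (auto split: centry.splits)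
      then show ?thesis by (intro exI[of _ "rev R"] exI[of _ "[]"]) simp
    qed
  qed simp
  assume ?rhs
  then obtain \<Gamma> \<Delta> where "R = rev \<Delta> @ CFresh a # rev \<Gamma>" "t \<in> Tm_ctx S \<Gamma>"
    by (metis rev_append rev_rev_ident append_Cons append_Nil rev.simps(2) append_assoc)
  then show ?lhs using fresh_ctx_rev_append_mono[of S "CFresh a # rev \<Gamma>" "rev \<Delta>"] by auto
qed

lemma mem_fresh_ctx_iff:
  "(a, t) \<in> fresh_ctx S \<Sigma> \<longleftrightarrow> (\<exists>\<Gamma> \<Delta>. \<Sigma> = \<Gamma> @ CFresh a # \<Delta> \<and> t \<in> Tm_ctx S \<Gamma>)"
  by (simp add: fresh_ctx_def mem_fresh_ctx_rev_iff)

lemma interp_trm_NameTy: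
  assumes "typed S \<Gamma> t \<tau>" and "\<tau> = NameTy \<nu>"
    and "\<And>x \<tau>. CVar x \<tau> \<in> set \<Gamma> \<Longrightarrow> gtyped S (\<theta> x) \<tau>"
  shows "\<exists>b. interp_trm \<theta> t = GAtom b"
  using assms(1,2)
proof (induction arbitrary: \<nu> rule: typed.induct)
  case (1 x \<tau>)
  then have "gtyped S (\<theta> x) (NameTy \<nu>)" using assms(3) by blast
  then show ?case by (auto elim: gtyped.cases)
qed auto

lemma interp_trm_gfresh:
  assumes "typed S \<Gamma> t \<tau>"
    and "CFresh a \<notin> set \<Gamma>"
    and "\<And>x \<tau>. CVar x \<tau> \<in> set \<Gamma> \<Longrightarrow> gtyped S (\<theta> x) \<tau>"
    and "\<And>x \<tau>. CVar x \<tau> \<in> set \<Gamma> \<Longrightarrow> gfresh a (\<theta> x)"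
  shows "gfresh a (interp_trm \<theta> t)"
proof -
  have atom: "\<exists>b. interp_trm \<theta> u = GAtom b" if "typed S \<Gamma> u (NameTy \<nu>)" for u \<nu>
    using interp_trm_NameTy[OF that refl] assms(3) by blast
  from assms(1) show ?thesis
  proof (induction rule: typed.induct)
    case (1 x \<tau>)
    then show ?case using assms(4) by simp
  next
    case (2 b)
    then show ?case using assms(2) by (auto intro: gfresh.intros)
  next
    case (4 f \<tau>s \<delta> ts)
    have "\<forall>u\<in>set ts. gfresh a (interp_trm \<theta> u)"
      using 4(2) by (induction ts \<tau>s rule: list_all2_induct) auto
    then show ?case by (auto intro!: gfresh.intros)
  next
    case (5 x \<nu> y t \<tau>)
    obtain b c where "interp_trm \<theta> x = GAtom b" "interp_trm \<theta> y = GAtom c"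
      using atom[OF 5(1)] atom[OF 5(2)] by blast
    with 5 show ?case by (auto elim: gfresh.cases intro: gfresh_gswap)
  next
    case (6 x \<nu> t \<tau>)
    obtain b where "interp_trm \<theta> x = GAtom b"
      using atom[OF 6(1)] by blast
    with 6 show ?case by (cases "a = b") (auto intro: gfresh.intros)
  qed (auto intro: gfresh.intros)
qed

theorem mainTheorem12:
  fixes S :: signature and \<Sigma> :: ctx and \<theta> :: interp
  assumes "ctx_wf \<Sigma>"
    and "interp_ok S \<theta> \<Sigma>"
  shows "\<forall>(a, t) \<in> fresh_ctx S \<Sigma>. models_fresh \<theta> a t"
proof clarify
  fix a t
  assume "(a, t) \<in> fresh_ctx S \<Sigma>"
  then obtain \<Gamma> \<Delta> where split: "\<Sigma> = \<Gamma> @ CFresh a # \<Delta>" and "t \<in> Tm_ctx S \<Gamma>"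
    unfolding mem_fresh_ctx_iff by blast
  then obtain \<tau> where "typed S \<Gamma> t \<tau>" unfolding Tm_ctx_def by blast
  moreover have "CFresh a \<notin> set \<Gamma>"
    using assms(1) split unfolding ctx_wf_def by simp
  moreover have "gtyped S (\<theta> x) \<tau>'" if "CVar x \<tau>' \<in> set \<Gamma>" for x \<tau>'
    using assms(2) that split unfolding interp_ok_def by auto
  moreover have "gfresh a (\<theta> x)" if "CVar x \<tau>' \<in> set \<Gamma>" for x \<tau>'
  proof -
    have "Var x \<in> Tm_ctx S \<Gamma>" using that unfolding Tm_ctx_def by (auto intro: typed.intros)
    then have "(a, Var x) \<in> fresh_ctx S \<Sigma>" using split mem_fresh_ctx_iff by blast
    then show ?thesis using assms(2) unfolding interp_ok_def by blast
  qed
  ultimately show "models_fresh \<theta> a t"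
    unfolding models_fresh_def by (rule interp_trm_gfresh)
qed

end
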